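(* Let $S\subseteq M_n$ and $T\subseteq M_{n'}$ be noncommutative graphs. Then $\mathcal{H}(S\otimes T)\leq \mathcal{H}(S)\,\mathcal{H}(T)$.
   Context: All scalars are complex; $M_n$ denotes complex $n\times n$ matrices. A noncommutative graph is a linear subspace $S\subseteq M_n$ that contains $I_n$ and is closed under conjugate transpose. For subspaces $S\subseteq M_n$, $T\subseteq M_{n'}$, $S\otimes T=\mathrm{span}\{A\otimes B: A\in S, B\in T\}\subseteq M_{nn'}$ (Kronecker product). For a subspace $S\subseteq M_n$, $M_m(S)$ denotes the set of $m\times m$ block matrices $B=[B_{i,j}]_{i,j\in[m]}$ with every block $B_{i,j}\in S$, viewed as elements of $M_{mn}$. The Haemers bound of a noncommutative graph $S\subseteq M_n$ is $\mathcal{H}(S)=\min\{\mathrm{rk}(B):\ m\in\mathbb{N},\ B\in M_m(S),\ \sum_{i=1}^m B_{i,i}=I_n\}$. *)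

theory Defs
  imports "Jordan_Normal_Form.Schur_Decomposition" "Jordan_Normal_Form.DL_Rank"
begin

definition mat_subspace :: "nat \<Rightarrow> complex mat set \<Rightarrow> bool" where
  "mat_subspace n S \<longleftrightarrow> S \<subseteq> carrier_mat n n \<and> 0\<^sub>m n n \<in> S \<and>
     (\<forall>A\<in>S. \<forall>B\<in>S. A + B \<in> S) \<and> (\<forall>c::complex. \<forall>A\<in>S. c \<cdot>\<^sub>m A \<in> S)"

definition nc_graph :: "nat \<Rightarrow> complex mat set \<Rightarrow> bool" where
  "nc_graph n S \<longleftrightarrow> mat_subspace n S \<and> 1\<^sub>m n \<in> S \<and> (\<forall>A\<in>S. mat_adjoint A \<in> S)"

definition kron :: "complex mat \<Rightarrow> complex mat \<Rightarrow> complex mat" where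
  "kron A B = mat (dim_row A * dim_row B) (dim_col A * dim_col B)
     (\<lambda>(i, j). A $$ (i div dim_row B, j div dim_col B) * B $$ (i mod dim_row B, j mod dim_col B))"

inductive_set tensor_space :: "nat \<Rightarrow> nat \<Rightarrow> complex mat set \<Rightarrow> complex mat set \<Rightarrow> complex mat set"
  for n n' S T where
  zero: "0\<^sub>m (n * n') (n * n') \<in> tensor_space n n' S T"
| kron: "A \<in> S \<Longrightarrow> B \<in> T \<Longrightarrow> kron A B \<in> tensor_space n n' S T"
| add: "X \<in> tensor_space n n' S T \<Longrightarrow> Y \<in> tensor_space n n' S T \<Longrightarrow> X + Y \<in> tensor_space n n' S T"
| smult: "X \<in> tensor_space n n' S T \<Longrightarrow> c \<cdot>\<^sub>m X \<in> tensor_space n n' S T"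

definition block :: "nat \<Rightarrow> complex mat \<Rightarrow> nat \<Rightarrow> nat \<Rightarrow> complex mat" where
  "block n B i j = mat n n (\<lambda>(a, b). B $$ (i * n + a, j * n + b))"

definition block_mats :: "nat \<Rightarrow> nat \<Rightarrow> complex mat set \<Rightarrow> complex mat set" where
  "block_mats m n S = {B \<in> carrier_mat (m * n) (m * n). \<forall>i<m. \<forall>j<m. block n B i j \<in> S}"

definition diag_block_sum :: "nat \<Rightarrow> nat \<Rightarrow> complex mat \<Rightarrow> complex mat" where
  "diag_block_sum m n B = mat n n (\<lambda>(a, b). \<Sum>i<m. B $$ (i * n + a, i * n + b))"

definition haemers :: "nat \<Rightarrow> complex mat set \<Rightarrow> nat" where
  "haemers n S = (LEAST r. \<exists>m B. B \<in> block_mats m n S \<and> diag_block_sum m n B = 1\<^sub>m n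
        \<and> r = vec_space.rank (m * n) B)"

end

theory Submission
  imports Defs
begin

text \<open>
  Take optimal witnesses \<open>B \<in> M\<^sub>m(S)\<close> and \<open>C \<in> M\<^sub>m\<^sub>'(T)\<close>. The \<open>mm' \<times> mm'\<close> block matrix whose
  block \<open>(im' + k, jm' + l)\<close> is \<open>B\<^sub>i\<^sub>j \<otimes> C\<^sub>k\<^sub>l\<close> lies in \<open>M\<^sub>m\<^sub>m\<^sub>'(S \<otimes> T)\<close>, and its diagonal blocks
  sum to \<open>(\<Sum>\<^sub>i B\<^sub>i\<^sub>i) \<otimes> (\<Sum>\<^sub>k C\<^sub>k\<^sub>k) = I\<^sub>n \<otimes> I\<^sub>n\<^sub>' = I\<^sub>n\<^sub>n\<^sub>'\<close>. It is obtained from \<open>B \<otimes> C\<close> by permuting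
  rows and columns, so multiplying rank factorizations of \<open>B\<close> and \<open>C\<close> shows that its rank is
  at most \<open>rk B \<cdot> rk C\<close>.
\<close>

lemma (in vec_space) rank_factorization:
  assumes A: "A \<in> carrier_mat n nc"
  shows "\<exists>f g. \<forall>x<n. \<forall>y<nc. A $$ (x, y) = (\<Sum>s<rank A. f s x * g s y)"
proof -
  obtain U where max: "maximal U (\<lambda>T. T \<subseteq> set (cols A) \<and> lin_indpt T)"
    using maximal_exists[of "\<lambda>T. T \<subseteq> set (cols A) \<and> lin_indpt T" "card (set (cols A))" "{}"]
    by (meson List.finite_set card_mono empty_iff empty_subsetI finite_lin_indpt2 rev_finite_subset)
  have rk: "rank A = card U" using rank_card_indpt[OF A max] .
  have U_cols: "U \<subseteq> set (cols A)" and U_indpt: "lin_indpt U"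
    using max unfolding maximal_def by auto
  have cols_carrier: "set (cols A) \<subseteq> carrier_vec n" using A cols_dim by blast
  have U_carrier: "U \<subseteq> carrier_vec n" using U_cols cols_carrier by blast
  have cols_span: "v \<in> span U" if v: "v \<in> set (cols A)" for v
  proof (cases "v \<in> U")
    case True
    then show ?thesis using U_carrier span_mem by blast
  next
    case False
    have "\<not> lin_indpt (U \<union> {v})"
    proof
      assume "lin_indpt (U \<union> {v})"
      then have "U \<union> {v} = U" using max v unfolding maximal_def
        by (metis U_cols Un_upper1 Un_insert_right empty_subsetI insert_subset sup_bot_right)
      then show False using False by auto
    qed
    then show ?thesis
      using lin_dep_iff_in_span[OF _ U_indpt _ False] U_carrier v cols_carrier by auto
  qed
  obtain ws where ws: "set ws = U" "distinct ws"
    using finite_distinct_list[OF finite_subset[OF U_cols List.finite_set]] by blast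
  have length_ws: "length ws = rank A" using ws rk distinct_card by fastforce
  have ws_carrier: "set ws \<subseteq> carrier_vec n" using ws U_carrier by simp
  have "\<exists>c. col A y = lincomb_list c ws" if "y < nc" for y
  proof -
    have "col A y \<in> set (cols A)" using A that by (simp add: cols_def)
    then have "col A y \<in> span_list ws"
      using cols_span span_list_as_span[OF ws_carrier] ws by simp
    then show ?thesis by (metis in_span_listE)
  qed
  then obtain c where c: "\<And>y. y < nc \<Longrightarrow> col A y = lincomb_list (c y) ws" by metis
  show ?thesis
  proof (intro exI allI impI)
    fix x y assume x: "x < n" and y: "y < nc"
    have "A $$ (x, y) = col A y $ x" using A x y by simp
    also have "\<dots> = (mat_of_cols n ws *\<^sub>v vec (length ws) (c y)) $ x"
      using c[OF y] lincomb_list_as_mat_mult ws_carrier by (metis carrier_vecD subsetD)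
    also have "\<dots> = (\<Sum>s<length ws. ws ! s $ x * c y s)"
      using x by (simp add: mult_mat_vec_def scalar_prod_def row_def mat_of_cols_def lessThan_atLeast0)
    finally show "A $$ (x, y) = (\<Sum>s<rank A. (\<lambda>s x. ws ! s $ x) s x * (\<lambda>s y. c y s) s y)"
      using length_ws by simp
  qed
qed

lemma (in vec_space) rank_sum_of_products_le:
  assumes "finite I"
  shows "rank (mat n nc (\<lambda>(x, y). \<Sum>s\<in>I. f s x * g s y)) \<le> card I"
  using assms
proof (induction I rule: finite_induct)
  case empty
  have zero: "mat n nc (\<lambda>(x, y). \<Sum>s\<in>{}. f s x * g s y) = 0\<^sub>m n nc"
    by (rule eq_matI) simp_all
  show ?case unfolding zero rank_0I by simp
next
  case (insert a I)
  let ?E = "mat n nc (\<lambda>(x, y). \<Sum>s\<in>I. f s x * g s y)"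
  let ?F = "mat n nc (\<lambda>(x, y). f a x * g a y)"
  have split: "mat n nc (\<lambda>(x, y). \<Sum>s\<in>insert a I. f s x * g s y) = ?F + ?E"
    by (rule eq_matI) (use insert in simp_all)
  have "rank ?F \<le> 1"
    by (rule rank_le_1_product_entries[of _ nc "f a" "g a"]) simp_all
  moreover have "rank (?F + ?E) \<le> rank ?F + rank ?E"
    by (rule rank_subadditive[where nc = nc]) simp_all
  ultimately show ?case using insert split by simp
qed

lemma rank_reindexed_entrywise_product_le:
  fixes B C :: "'a::field mat"
  assumes B: "B \<in> carrier_mat M K" and C: "C \<in> carrier_mat M' K'"
    and row_bounds: "\<And>x. x < N \<Longrightarrow> \<rho> x < M \<and> \<rho>' x < M'"
    and col_bounds: "\<And>y. y < L \<Longrightarrow> \<sigma> y < K \<and> \<sigma>' y < K'"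
  shows "vec_space.rank N (mat N L (\<lambda>(x, y). B $$ (\<rho> x, \<sigma> y) * C $$ (\<rho>' x, \<sigma>' y)))
    \<le> vec_space.rank M B * vec_space.rank M' C"
proof -
  let ?r = "vec_space.rank M B" and ?r' = "vec_space.rank M' C"
  obtain f g where fg: "\<And>x y. x < M \<Longrightarrow> y < K \<Longrightarrow> B $$ (x, y) = (\<Sum>s<?r. f s x * g s y)"
    using vec_space.rank_factorization[OF B] by blast
  obtain f' g' where fg': "\<And>x y. x < M' \<Longrightarrow> y < K' \<Longrightarrow> C $$ (x, y) = (\<Sum>t<?r'. f' t x * g' t y)"
    using vec_space.rank_factorization[OF C] by blast
  let ?I = "{..<?r} \<times> {..<?r'}"
  define F where "F st x = f (fst st) (\<rho> x) * f' (snd st) (\<rho>' x)" for st x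
  define G where "G st y = g (fst st) (\<sigma> y) * g' (snd st) (\<sigma>' y)" for st y
  have "mat N L (\<lambda>(x, y). B $$ (\<rho> x, \<sigma> y) * C $$ (\<rho>' x, \<sigma>' y))
    = mat N L (\<lambda>(x, y). \<Sum>st\<in>?I. F st x * G st y)"
  proof (rule eq_matI)
    fix x y assume "x < dim_row (mat N L (\<lambda>(x, y). \<Sum>st\<in>?I. F st x * G st y))"
      and "y < dim_col (mat N L (\<lambda>(x, y). \<Sum>st\<in>?I. F st x * G st y))"
    then have x: "x < N" and y: "y < L" by simp_all
    have "B $$ (\<rho> x, \<sigma> y) * C $$ (\<rho>' x, \<sigma>' y)
      = (\<Sum>s<?r. f s (\<rho> x) * g s (\<sigma> y)) * (\<Sum>t<?r'. f' t (\<rho>' x) * g' t (\<sigma>' y))"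
      using fg fg' row_bounds[OF x] col_bounds[OF y] by simp
    also have "\<dots> = (\<Sum>(s, t)\<in>?I. f s (\<rho> x) * g s (\<sigma> y) * (f' t (\<rho>' x) * g' t (\<sigma>' y)))"
      by (simp add: sum_product sum.cartesian_product)
    also have "\<dots> = (\<Sum>st\<in>?I. F st x * G st y)"
      by (simp add: F_def G_def split_def ac_simps)
    finally show "mat N L (\<lambda>(x, y). B $$ (\<rho> x, \<sigma> y) * C $$ (\<rho>' x, \<sigma>' y)) $$ (x, y)
      = mat N L (\<lambda>(x, y). \<Sum>st\<in>?I. F st x * G st y) $$ (x, y)"
      using x y by simp
  qed simp_all
  also have "vec_space.rank N \<dots> \<le> card ?I"
    by (rule vec_space.rank_sum_of_products_le) simp
  finally show ?thesis by (simp add: card_cartesian_product)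
qed

lemma sum_lessThan_mult_div_mod:
  fixes h :: "nat \<Rightarrow> nat \<Rightarrow> 'a::comm_monoid_add"
  shows "(\<Sum>p<m * k. h (p div k) (p mod k)) = (\<Sum>i<m. \<Sum>j<k. h i j)"
proof -
  have "(\<Sum>p\<in>{i * k..<i * k + k}. h (p div k) (p mod k)) = (\<Sum>j<k. h i j)" for i
    using sum.shift_bounds_nat_ivl[of "\<lambda>p. h (p div k) (p mod k)" 0 "i * k" k]
    by (simp add: add.commute atLeast0LessThan)
  then show ?thesis
    by (simp add: sum.nat_group[symmetric])
qed

lemma mult_add_less_mult:
  fixes i a m n :: nat
  assumes "i < m" "a < n"
  shows "i * n + a < m * n"
proof -
  have "(i + 1) * n \<le> m * n" using assms(1) by (intro mult_right_mono) auto
  then show ?thesis using assms(2) by simp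
qed

definition block_kron_fst :: "nat \<Rightarrow> nat \<Rightarrow> nat \<Rightarrow> nat \<Rightarrow> nat" where
  "block_kron_fst m' n n' R = R div (n * n') div m' * n + R mod (n * n') div n'"

definition block_kron_snd :: "nat \<Rightarrow> nat \<Rightarrow> nat \<Rightarrow> nat \<Rightarrow> nat" where
  "block_kron_snd m' n n' R = R div (n * n') mod m' * n' + R mod (n * n') mod n'"

text \<open>
  Writing \<open>R = (i m' + k) n n' + a n' + c\<close> and \<open>R' = (j m' + l) n n' + b n' + d\<close>, the entry at
  \<open>(R, R')\<close> is \<open>B(i n + a, j n + b) \<cdot> C(k n' + c, l n' + d)\<close>; hence block \<open>(i m' + k, j m' + l)\<close>
  is \<open>B\<^sub>i\<^sub>j \<otimes> C\<^sub>k\<^sub>l\<close>, and the matrix is \<open>B \<otimes> C\<close> with rows and columns permuted alike.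
\<close>

definition block_kron :: "nat \<Rightarrow> nat \<Rightarrow> nat \<Rightarrow> nat \<Rightarrow> complex mat \<Rightarrow> complex mat \<Rightarrow> complex mat" where
  "block_kron m m' n n' B C = mat (m * m' * (n * n')) (m * m' * (n * n'))
     (\<lambda>(R, R'). B $$ (block_kron_fst m' n n' R, block_kron_fst m' n n' R')
              * C $$ (block_kron_snd m' n n' R, block_kron_snd m' n n' R'))"

lemma block_kron_fst_snd_block_index:
  assumes "q < n * n'"
  shows "block_kron_fst m' n n' (p * (n * n') + q) = p div m' * n + q div n'"
    and "block_kron_snd m' n n' (p * (n * n') + q) = p mod m' * n' + q mod n'"
proof -
  have "(p * (n * n') + q) div (n * n') = p"
    using assms by (metis add.commute add_0 div_less div_mult_self1 less_nat_zero_code)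
  moreover have "(p * (n * n') + q) mod (n * n') = q"
    using assms by simp
  ultimately show "block_kron_fst m' n n' (p * (n * n') + q) = p div m' * n + q div n'"
    and "block_kron_snd m' n n' (p * (n * n') + q) = p mod m' * n' + q mod n'"
    by (simp_all add: block_kron_fst_def block_kron_snd_def)
qed

lemma block_kron_fst_snd_less:
  assumes "R < m * m' * (n * n')"
  shows "block_kron_fst m' n n' R < m * n" and "block_kron_snd m' n n' R < m' * n'"
proof -
  have p: "R div (n * n') < m * m'"
    using assms by (simp add: less_mult_imp_div_less)
  have q: "R mod (n * n') < n * n'"
    using assms by (metis mod_less_divisor mult_eq_0_iff not_gr_zero not_less_zero)
  have "m' > 0" "n' > 0"
    using p q by (auto intro!: gr0I)
  with p q show "block_kron_fst m' n n' R < m * n" "block_kron_snd m' n n' R < m' * n'"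
    unfolding block_kron_fst_def block_kron_snd_def
    by (auto intro!: mult_add_less_mult simp: less_mult_imp_div_less)
qed

lemma block_block_kron:
  assumes p: "p < m * m'" and p': "p' < m * m'"
  shows "block (n * n') (block_kron m m' n n' B C) p p'
    = kron (block n B (p div m') (p' div m')) (block n' C (p mod m') (p' mod m'))"
proof (rule eq_matI)
  fix q q'
  assume "q < dim_row (kron (block n B (p div m') (p' div m')) (block n' C (p mod m') (p' mod m')))"
    and "q' < dim_col (kron (block n B (p div m') (p' div m')) (block n' C (p mod m') (p' mod m')))"
  then have q: "q < n * n'" and q': "q' < n * n'" by (simp_all add: kron_def block_def)
  then have "n' > 0" by (auto intro!: gr0I)
  then show "block (n * n') (block_kron m m' n n' B C) p p' $$ (q, q')
    = kron (block n B (p div m') (p' div m')) (block n' C (p mod m') (p' mod m')) $$ (q, q')"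
    using q q' mult_add_less_mult[OF p q] mult_add_less_mult[OF p' q']
    by (simp add: block_def block_kron_def kron_def block_kron_fst_snd_block_index
        less_mult_imp_div_less)
qed (simp_all add: kron_def block_def)

lemma block_kron_in_block_mats:
  assumes "B \<in> block_mats m n S" and "C \<in> block_mats m' n' T"
  shows "block_kron m m' n n' B C \<in> block_mats (m * m') (n * n') (tensor_space n n' S T)"
  unfolding block_mats_def
proof (intro CollectI conjI allI impI)
  fix p p' assume p: "p < m * m'" and p': "p' < m * m'"
  then have "p div m' < m" "p' div m' < m" "p mod m' < m'" "p' mod m' < m'"
    by (auto simp: less_mult_imp_div_less intro!: mod_less_divisor gr0I)
  then have "block n B (p div m') (p' div m') \<in> S" "block n' C (p mod m') (p' mod m') \<in> T"
    using assms by (simp_all add: block_mats_def)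
  then show "block (n * n') (block_kron m m' n n' B C) p p' \<in> tensor_space n n' S T"
    unfolding block_block_kron[OF p p'] by (rule tensor_space.kron)
qed (simp add: block_kron_def)

lemma diag_block_sum_block_kron:
  "diag_block_sum (m * m') (n * n') (block_kron m m' n n' B C)
    = kron (diag_block_sum m n B) (diag_block_sum m' n' C)"
proof (rule eq_matI)
  fix q q' assume "q < dim_row (kron (diag_block_sum m n B) (diag_block_sum m' n' C))"
    and "q' < dim_col (kron (diag_block_sum m n B) (diag_block_sum m' n' C))"
  then have q: "q < n * n'" and q': "q' < n * n'" by (simp_all add: kron_def diag_block_sum_def)
  then have "n' > 0" by (auto intro!: gr0I)
  then have idx: "q div n' < n" "q' div n' < n" "q mod n' < n'" "q' mod n' < n'"
    using q q' by (simp_all add: less_mult_imp_div_less)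
  let ?b = "\<lambda>i. B $$ (i * n + q div n', i * n + q' div n')"
  let ?c = "\<lambda>k. C $$ (k * n' + q mod n', k * n' + q' mod n')"
  have "diag_block_sum (m * m') (n * n') (block_kron m m' n n' B C) $$ (q, q')
    = (\<Sum>p<m * m'. ?b (p div m') * ?c (p mod m'))"
    using q q' mult_add_less_mult[OF _ q] mult_add_less_mult[OF _ q']
    by (auto simp: diag_block_sum_def block_kron_def block_kron_fst_snd_block_index
        intro!: sum.cong)
  also have "\<dots> = (\<Sum>i<m. \<Sum>k<m'. ?b i * ?c k)"
    by (rule sum_lessThan_mult_div_mod)
  also have "\<dots> = (\<Sum>i<m. ?b i) * (\<Sum>k<m'. ?c k)"
    by (simp add: sum_product)
  also have "\<dots> = kron (diag_block_sum m n B) (diag_block_sum m' n' C) $$ (q, q')"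
    using q q' idx by (simp add: kron_def diag_block_sum_def)
  finally show "diag_block_sum (m * m') (n * n') (block_kron m m' n n' B C) $$ (q, q')
    = kron (diag_block_sum m n B) (diag_block_sum m' n' C) $$ (q, q')" .
qed (simp_all add: kron_def diag_block_sum_def)

lemma kron_one_mat: "kron (1\<^sub>m n) (1\<^sub>m n') = 1\<^sub>m (n * n')"
proof (rule eq_matI)
  fix q q' assume "q < dim_row (1\<^sub>m (n * n') :: complex mat)"
    and "q' < dim_col (1\<^sub>m (n * n') :: complex mat)"
  then have q: "q < n * n'" and q': "q' < n * n'" by simp_all
  then have "n' > 0" by (auto intro!: gr0I)
  moreover have "q = q' \<longleftrightarrow> q div n' = q' div n' \<and> q mod n' = q' mod n'"
    by (metis div_mult_mod_eq)
  ultimately show "kron (1\<^sub>m n) (1\<^sub>m n') $$ (q, q') = 1\<^sub>m (n * n') $$ (q, q')"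
    using q q' by (simp add: kron_def less_mult_imp_div_less)
qed (simp_all add: kron_def)

lemma rank_block_kron_le:
  assumes "B \<in> carrier_mat (m * n) (m * n)" and "C \<in> carrier_mat (m' * n') (m' * n')"
  shows "vec_space.rank (m * m' * (n * n')) (block_kron m m' n n' B C)
    \<le> vec_space.rank (m * n) B * vec_space.rank (m' * n') C"
  unfolding block_kron_def
  by (rule rank_reindexed_entrywise_product_le[OF assms]) (simp_all add: block_kron_fst_snd_less)

lemma haemers_le_rank:
  assumes "B \<in> block_mats m n S" and "diag_block_sum m n B = 1\<^sub>m n"
  shows "haemers n S \<le> vec_space.rank (m * n) B"
  unfolding haemers_def using assms by (intro Least_le) blast

lemma haemers_attained:
  assumes "1\<^sub>m n \<in> S"
  obtains m B where "B \<in> block_mats m n S" and "diag_block_sum m n B = 1\<^sub>m n"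
    and "haemers n S = vec_space.rank (m * n) B"
proof -
  let ?witness = "\<lambda>r. \<exists>m B. B \<in> block_mats m n S \<and> diag_block_sum m n B = 1\<^sub>m n
    \<and> r = vec_space.rank (m * n) B"
  have "block n (1\<^sub>m n) 0 0 = 1\<^sub>m n"
    by (rule eq_matI) (simp_all add: block_def)
  then have "1\<^sub>m n \<in> block_mats 1 n S"
    using assms by (simp add: block_mats_def)
  moreover have "diag_block_sum 1 n (1\<^sub>m n) = 1\<^sub>m n"
    by (rule eq_matI) (simp_all add: diag_block_sum_def)
  ultimately have "?witness (vec_space.rank (1 * n) (1\<^sub>m n :: complex mat))"
    by (intro exI[where x = 1] exI[where x = "1\<^sub>m n"]) simp
  then have "?witness (haemers n S)"
    unfolding haemers_def by (rule LeastI)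
  with that show ?thesis by blast
qed

theorem mainTheorem2:
  fixes S T :: "complex mat set" and n n' :: nat
  assumes "nc_graph n S" and "nc_graph n' T"
  shows "haemers (n * n') (tensor_space n n' S T) \<le> haemers n S * haemers n' T"
proof -
  obtain m B where B: "B \<in> block_mats m n S" "diag_block_sum m n B = 1\<^sub>m n"
    and rank_B: "haemers n S = vec_space.rank (m * n) B"
    using haemers_attained assms(1) unfolding nc_graph_def by metis
  obtain m' C where C: "C \<in> block_mats m' n' T" "diag_block_sum m' n' C = 1\<^sub>m n'"
    and rank_C: "haemers n' T = vec_space.rank (m' * n') C"
    using haemers_attained assms(2) unfolding nc_graph_def by metis
  have "block_kron m m' n n' B C \<in> block_mats (m * m') (n * n') (tensor_space n n' S T)"
    using B(1) C(1) by (rule block_kron_in_block_mats)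
  moreover have "diag_block_sum (m * m') (n * n') (block_kron m m' n n' B C) = 1\<^sub>m (n * n')"
    by (simp add: diag_block_sum_block_kron B(2) C(2) kron_one_mat)
  ultimately have "haemers (n * n') (tensor_space n n' S T)
      \<le> vec_space.rank (m * m' * (n * n')) (block_kron m m' n n' B C)"
    by (rule haemers_le_rank)
  also have "\<dots> \<le> haemers n S * haemers n' T"
    unfolding rank_B rank_C
    using B(1) C(1) by (intro rank_block_kron_le) (simp_all add: block_mats_def)
  finally show ?thesis .
qed

end
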